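(* For every $n\ge 2$ we have $\mathrm{OT}_n(\mathbb{C})\subseteq\mathrm{ODECO}_n(\mathbb{C})\subseteq\overline{\mathrm{OT}_n(\mathbb{C})}$, and the first inclusion is strict for every $n\ge 2$.
   Context: Associate to $T\in\mathbb{C}^{n\times n\times n}$ the trilinear form $t(x,y,z)=\sum_{i,j,k}T_{ijk}x_iy_jz_k$. $\mathrm{OT}_n(\mathbb{C})$ is the set of tensors whose trilinear form can be written $t(x,y,z)=g(Ax,By,Cz)$ with $A,B,C$ complex orthogonal ($A^TA=\mathrm{Id}$ etc.) and $g=\sum_{i=1}^n\alpha_ix_iy_iz_i$. On $\mathbb{C}^n$ use the bilinear form $\langle x,y\rangle=\sum_ix_iy_i$. $\mathrm{ODECO}_n(\mathbb{C})$ is the set of tensors that can be written $\sum_{j=1}^k u_j\otimes v_j\otimes w_j$ where each of the lists $(u_1,\dots,u_k)$, $(v_1,\dots,v_k)$, $(w_1,\dots,w_k)$ consists of $k$ linearly independent, pairwise orthogonal (w.r.t. $\langle\cdot,\cdot\rangle$) vectors of $\mathbb{C}^n$. Closure is in the Euclidean topology of $\mathbb{C}^{n\times n\times n}$. *)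

theory Defs
  imports "HOL-Analysis.Analysis"
begin

text \<open>Tensors in C^{n x n x n}, indexed by a finite type 'n with CARD('n) = n.
  Entry T_{ijk} is T $ i $ j $ k.\<close>
type_synonym 'n tensor3 = "complex ^'n ^'n ^'n"

text \<open>The (non-Hermitian) symmetric bilinear form on C^n.\<close>
definition bil :: "complex ^('n::finite) \<Rightarrow> complex ^'n \<Rightarrow> complex" where
  "bil x y = (\<Sum>i\<in>UNIV. x $ i * y $ i)"

definition trilin :: "('n::finite) tensor3 \<Rightarrow> complex ^'n \<Rightarrow> complex ^'n \<Rightarrow> complex ^'n \<Rightarrow> complex" where
  "trilin T x y z = (\<Sum>i\<in>UNIV. \<Sum>j\<in>UNIV. \<Sum>k\<in>UNIV. T $ i $ j $ k * x $ i * y $ j * z $ k)"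

definition diag_form :: "complex ^('n::finite) \<Rightarrow> complex ^'n \<Rightarrow> complex ^'n \<Rightarrow> complex ^'n \<Rightarrow> complex" where
  "diag_form \<alpha> x y z = (\<Sum>i\<in>UNIV. \<alpha> $ i * x $ i * y $ i * z $ i)"

definition corthogonal :: "complex ^'n::finite ^'n \<Rightarrow> bool" where
  "corthogonal A \<longleftrightarrow> transpose A ** A = mat 1"

definition OT :: "('n::finite) tensor3 set" where
  "OT = {T. \<exists>A B C \<alpha>. corthogonal A \<and> corthogonal B \<and> corthogonal C \<and>
            (\<forall>x y z. trilin T x y z = diag_form \<alpha> (A *v x) (B *v y) (C *v z))}"

definition outer3 :: "complex ^'n \<Rightarrow> complex ^'n \<Rightarrow> complex ^'n \<Rightarrow> 'n tensor3" where
  "outer3 u v w = (\<chi> i j k. u $ i * v $ j * w $ k)"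

definition lin_indep_orth :: "nat \<Rightarrow> (nat \<Rightarrow> complex ^('n::finite)) \<Rightarrow> bool" where
  "lin_indep_orth k u \<longleftrightarrow>
     (\<forall>c :: nat \<Rightarrow> complex. (\<Sum>j<k. c j *s u j) = 0 \<longrightarrow> (\<forall>j<k. c j = 0)) \<and>
     (\<forall>i<k. \<forall>j<k. i \<noteq> j \<longrightarrow> bil (u i) (u j) = 0)"

definition ODECO :: "('n::finite) tensor3 set" where
  "ODECO = {T. \<exists>k u v w. lin_indep_orth k u \<and> lin_indep_orth k v \<and> lin_indep_orth k w \<and>
              T = (\<Sum>j<k. outer3 (u j) (v j) (w j))}"

end

theory Submission
  imports Defs
begin

text \<open>A tensor in OT is \<open>\<Sum>\<^sub>i \<alpha>\<^sub>i A\<^sub>i \<otimes> B\<^sub>i \<otimes> C\<^sub>i\<close> over the rows of complex orthogonal matrices, and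
  dropping the terms with \<open>\<alpha>\<^sub>i = 0\<close> exhibits it as ODECO. Conversely, pairwise orthogonal vectors
  that are non-isotropic (\<open>\<langle>u, u\<rangle> \<noteq> 0\<close>) can be normalized and completed to the rows of an
  orthogonal matrix, so ODECO tensors built from such families lie in OT. Any ODECO family becomes
  non-isotropic after adding \<open>\<epsilon> y\<^sub>j\<close> to its isotropic members \<open>u\<^sub>j\<close>, where the \<open>y\<^sub>j\<close> form a totally
  isotropic family dual to the \<open>u\<^sub>l\<close>; letting \<open>\<epsilon> \<rightarrow> 0\<close> gives ODECO \<subseteq> closure of OT.
  Finally \<open>u \<otimes> e\<^sub>1 \<otimes> e\<^sub>1\<close> with the isotropic \<open>u = e\<^sub>1 + i e\<^sub>2\<close> is ODECO, but in any OT
  decomposition of a tensor \<open>u \<otimes> v \<otimes> w\<close> with \<open>u\<close> isotropic every \<open>\<alpha>\<^sub>i\<^sup>2\<close> vanishes.\<close>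

lemma bil_commute: "bil x y = bil y x"
  unfolding bil_def by (simp add: mult.commute)

lemma bil_add_left: "bil (x + y) z = bil x z + bil y z"
  unfolding bil_def by (simp add: distrib_right sum.distrib)

lemma bil_add_right: "bil z (x + y) = bil z x + bil z y"
  unfolding bil_def by (simp add: distrib_left sum.distrib)

lemma bil_diff_left: "bil (x - y) z = bil x z - bil y z"
  unfolding bil_def by (simp add: left_diff_distrib sum_subtractf)

lemma bil_diff_right: "bil z (x - y) = bil z x - bil z y"
  unfolding bil_def by (simp add: right_diff_distrib sum_subtractf)

lemma bil_scale_left: "bil (c *s x) y = c * bil x y"
  unfolding bil_def by (simp add: sum_distrib_left mult.assoc)

lemma bil_scale_right: "bil y (c *s x) = c * bil y x"
  unfolding bil_def by (simp add: sum_distrib_left algebra_simps)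

lemma bil_zero_left [simp]: "bil 0 y = 0"
  unfolding bil_def by simp

lemma bil_zero_right [simp]: "bil y 0 = 0"
  unfolding bil_def by simp

lemma bil_sum_left: "bil (\<Sum>j\<in>S. f j) y = (\<Sum>j\<in>S. bil (f j) y)"
  by (induction S rule: infinite_finite_induct) (auto simp: bil_add_left)

lemma bil_sum_right: "bil y (\<Sum>j\<in>S. f j) = (\<Sum>j\<in>S. bil y (f j))"
  by (induction S rule: infinite_finite_induct) (auto simp: bil_add_right)

lemmas bil_linear = bil_add_left bil_add_right bil_diff_left bil_diff_right
  bil_scale_left bil_scale_right bil_sum_left bil_sum_right

lemma bil_axis_right: "bil x (axis i 1) = x $ i"
  unfolding bil_def axis_def by (simp add: if_distrib cong: if_cong)

lemma bil_nondegenerate: "(\<And>z. bil w z = 0) \<Longrightarrow> w = 0"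
  by (metis bil_axis_right vec_eq_iff zero_index)

lemma bil_self_add: "bil (x + y) (x + y) = bil x x + 2 * bil x y + bil y y"
  by (simp add: bil_linear bil_commute[of y x])

lemma bil_normalize:
  assumes "bil x x \<noteq> 0"
  shows "bil ((1 / csqrt (bil x x)) *s x) ((1 / csqrt (bil x x)) *s x) = 1"
proof -
  have "csqrt (bil x x) * csqrt (bil x x) = bil x x"
    using power2_csqrt[of "bil x x"] by (simp add: power2_eq_square)
  with assms show ?thesis by (auto simp: bil_linear field_simps)
qed

lemma matrix_vector_mult_component_bil: "(A *v x) $ i = bil (A $ i) x"
  unfolding bil_def matrix_vector_mult_def by simp

lemma corthogonal_iff_rows:
  "corthogonal A \<longleftrightarrow> (\<forall>i j. bil (A $ i) (A $ j) = (if i = j then 1 else 0))"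
proof -
  have "corthogonal A \<longleftrightarrow> A ** transpose A = mat 1"
    unfolding corthogonal_def using matrix_left_right_inverse by blast
  also have "\<dots> \<longleftrightarrow> (\<forall>i j. bil (A $ i) (A $ j) = (if i = j then 1 else 0))"
    by (simp add: vec_eq_iff matrix_matrix_mult_def transpose_def mat_def bil_def)
  finally show ?thesis .
qed

lemma corthogonal_mult_row: "corthogonal A \<Longrightarrow> A *v (A $ m) = axis m 1"
  by (simp add: vec_eq_iff matrix_vector_mult_component_bil corthogonal_iff_rows axis_def)

lemma trilin_outer3: "trilin (outer3 u v w) x y z = bil u x * bil v y * bil w z"
proof -
  have "bil w z * bil v y * bil u x =
      (\<Sum>i\<in>UNIV. \<Sum>j\<in>UNIV. \<Sum>k\<in>UNIV. (w$k*z$k) * (v$j*y$j) * (u$i*x$i))"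
    by (simp add: bil_def sum_distrib_left sum_distrib_right)
  then show ?thesis unfolding trilin_def outer3_def by (simp add: mult_ac)
qed

lemma trilin_add: "trilin (S + T) x y z = trilin S x y z + trilin T x y z"
  unfolding trilin_def by (simp add: algebra_simps sum.distrib)

lemma trilin_zero [simp]: "trilin 0 x y z = 0"
  unfolding trilin_def by simp

lemma trilin_sum: "trilin (\<Sum>j\<in>S. f j) x y z = (\<Sum>j\<in>S. trilin (f j) x y z)"
  by (induction S rule: infinite_finite_induct) (auto simp: trilin_add)

lemma trilin_axis: "trilin T (axis a 1) (axis b 1) (axis c 1) = T $ a $ b $ c"
  unfolding trilin_def axis_def
  by (simp add: if_distrib[where f="\<lambda>x. x * _"] if_distrib[of "(*) _"] cong: if_cong)

lemma tensor_eqI: "(\<And>x y z. trilin T x y z = trilin T' x y z) \<Longrightarrow> T = T'"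
  by (metis trilin_axis vec_eq_iff)

lemma diag_form_eq_trilin:
  "diag_form \<alpha> (A *v x) (B *v y) (C *v z)
     = trilin (\<Sum>i\<in>UNIV. outer3 (\<alpha> $ i *s A $ i) (B $ i) (C $ i)) x y z"
  by (simp add: diag_form_def trilin_sum trilin_outer3 matrix_vector_mult_component_bil
      bil_scale_left mult.assoc)

lemma mem_OT_iff:
  "T \<in> OT \<longleftrightarrow> (\<exists>A B C \<alpha>. corthogonal A \<and> corthogonal B \<and> corthogonal C \<and>
     T = (\<Sum>i\<in>UNIV. outer3 (\<alpha> $ i *s A $ i) (B $ i) (C $ i)))"
proof
  assume "T \<in> OT"
  then show "\<exists>A B C \<alpha>. corthogonal A \<and> corthogonal B \<and> corthogonal C \<and>
     T = (\<Sum>i\<in>UNIV. outer3 (\<alpha> $ i *s A $ i) (B $ i) (C $ i))"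
    unfolding OT_def diag_form_eq_trilin by (blast intro: tensor_eqI)
qed (auto simp: OT_def diag_form_eq_trilin)

definition lin_indep :: "nat \<Rightarrow> (nat \<Rightarrow> complex ^('n::finite)) \<Rightarrow> bool" where
  "lin_indep k u \<longleftrightarrow> (\<forall>c :: nat \<Rightarrow> complex. (\<Sum>j<k. c j *s u j) = 0 \<longrightarrow> (\<forall>j<k. c j = 0))"

lemma lin_indep_orth_iff:
  "lin_indep_orth k u \<longleftrightarrow> lin_indep k u \<and> (\<forall>i<k. \<forall>j<k. i \<noteq> j \<longrightarrow> bil (u i) (u j) = 0)"
  unfolding lin_indep_orth_def lin_indep_def ..

lemma lin_indep_inj_on:
  assumes "lin_indep k u"
  shows "inj_on u {..<k}"
proof (rule inj_onI, rule ccontr)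
  fix i j assume ij: "i \<in> {..<k}" "j \<in> {..<k}" "u i = u j" "i \<noteq> j"
  define c where "c l = (if l = i then 1 else if l = j then -1 else (0::complex))" for l
  have "(\<Sum>l<k. c l *s u l) = (\<Sum>l<k. (if l = i then u i else 0) - (if l = j then u j else 0))"
    by (intro sum.cong) (auto simp: c_def ij)
  also have "\<dots> = 0" using ij by (simp add: sum_subtractf)
  finally have "c i = 0" using assms ij unfolding lin_indep_def by blast
  then show False by (simp add: c_def)
qed

lemma lin_indep_independent:
  assumes "lin_indep k u"
  shows "vec.independent (u ` {..<k})"
  unfolding vec.independent_explicit
proof (intro conjI allI impI ballI)
  show "finite (u ` {..<k})" by simp
  fix c v assume s: "(\<Sum>v\<in>u ` {..<k}. c v *s v) = 0" and v: "v \<in> u ` {..<k}"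
  have "(\<Sum>j<k. c (u j) *s u j) = 0"
    using s by (simp add: sum.reindex[OF lin_indep_inj_on[OF assms]])
  then have "\<forall>j<k. c (u j) = 0"
    using assms[unfolded lin_indep_def, rule_format, of "\<lambda>j. c (u j)"] by blast
  then show "c v = 0" using v by auto
qed

lemma lin_indep_le_card:
  assumes "lin_indep k (u :: nat \<Rightarrow> complex^'n::finite)"
  shows "k \<le> CARD('n)"
proof -
  have "card (u ` {..<k}) \<le> vec.dim (UNIV :: (complex^'n) set)"
    by (rule vec.independent_card_le_dim[OF subset_UNIV lin_indep_independent[OF assms]])
  moreover have "card (u ` {..<k}) = k" using card_image[OF lin_indep_inj_on[OF assms]] by simp
  moreover have "vec.dim (UNIV :: (complex^'n) set) = CARD('n)" by (rule vec_dim_card)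
  ultimately show ?thesis by linarith
qed

text \<open>The dual vectors are rows of the matrix of a linear map sending \<open>u l\<close> to a unit vector.\<close>
lemma lin_indep_dual:
  assumes "lin_indep k (u :: nat \<Rightarrow> complex^'n::finite)"
  shows "\<exists>z. \<forall>j<k. \<forall>l<k. bil (u l) (z j) = (if l = j then 1 else 0)"
proof -
  have "\<exists>\<iota> :: nat \<Rightarrow> 'n. \<iota> ` {..<k} \<subseteq> UNIV \<and> inj_on \<iota> {..<k}"
    by (rule card_le_inj) (simp_all add: lin_indep_le_card[OF assms])
  then obtain \<iota> :: "nat \<Rightarrow> 'n" where \<iota>: "inj_on \<iota> {..<k}" by blast
  have inj_u: "inj_on u {..<k}" by (rule lin_indep_inj_on[OF assms])
  obtain g where g: "Vector_Spaces.linear (*s) (*s) g"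
    and gu: "\<forall>v\<in>u ` {..<k}. g v = axis (\<iota> (the_inv_into {..<k} u v)) (1::complex)"
    using vec.linear_independent_extend[OF lin_indep_independent[OF assms],
        of "\<lambda>v. axis (\<iota> (the_inv_into {..<k} u v)) 1"] by blast
  have gu': "g (u l) = axis (\<iota> l) 1" if "l < k" for l
    using gu that the_inv_into_f_f[OF inj_u] by simp
  have "bil (u l) (matrix g $ \<iota> j) = (if l = j then 1 else 0)" if "j < k" "l < k" for j l
  proof -
    have "bil (u l) (matrix g $ \<iota> j) = (matrix g *v u l) $ \<iota> j"
      by (simp add: matrix_vector_mult_component_bil bil_commute)
    also have "\<dots> = axis (\<iota> l) 1 $ \<iota> j" using that by (simp add: matrix_works[OF g] gu')
    also have "\<dots> = (if l = j then 1 else 0)" using \<iota> that by (auto simp: axis_def inj_on_def)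
    finally show ?thesis .
  qed
  then show ?thesis by (intro exI[of _ "\<lambda>j. matrix g $ \<iota> j"]) blast
qed

definition orthonormal :: "nat \<Rightarrow> (nat \<Rightarrow> complex ^('n::finite)) \<Rightarrow> bool" where
  "orthonormal m a \<longleftrightarrow> (\<forall>i<m. \<forall>j<m. bil (a i) (a j) = (if i = j then 1 else 0))"

lemma orthonormal_residual_orthogonal:
  assumes "orthonormal m a" "i < m"
  shows "bil (a i) (z - (\<Sum>j<m. bil (a j) z *s a j)) = 0"
proof -
  have "bil (a i) (\<Sum>j<m. bil (a j) z *s a j) = (\<Sum>j<m. if j = i then bil (a j) z else 0)"
    using assms unfolding orthonormal_def bil_sum_right bil_scale_right by (intro sum.cong) auto
  then show ?thesis using assms(2) by (simp add: bil_diff_right)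
qed

text \<open>If the form vanished identically on the orthogonal complement \<open>W\<close> of the \<open>a j\<close>, then
  (by polarization) \<open>W\<close> would be orthogonal to itself and hence to everything, so \<open>W = 0\<close> and
  the \<open>m < n\<close> vectors \<open>a j\<close> would span \<open>\<complex>\<^sup>n\<close>.\<close>
lemma orthonormal_complement_nonisotropic:
  assumes on: "orthonormal m (a :: nat \<Rightarrow> complex^'n::finite)" and m: "m < CARD('n)"
  shows "\<exists>x. (\<forall>j<m. bil (a j) x = 0) \<and> bil x x \<noteq> 0"
proof (rule ccontr)
  assume "\<not> ?thesis"
  then have isotropic: "bil x x = 0" if "\<forall>j<m. bil (a j) x = 0" for x
    using that by blast
  have W_self_orth: "bil w w' = 0" if "\<forall>j<m. bil (a j) w = 0" "\<forall>j<m. bil (a j) w' = 0" for w w'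
  proof -
    have "\<forall>j<m. bil (a j) (w + w') = 0" using that by (simp add: bil_add_right)
    then have "bil (w + w') (w + w') = 0" by (rule isotropic)
    then show ?thesis using isotropic that by (simp add: bil_self_add)
  qed
  define p where "p z = (\<Sum>j<m. bil (a j) z *s a j)" for z
  have residual: "\<forall>i<m. bil (a i) (z - p z) = 0" for z
    unfolding p_def using orthonormal_residual_orthogonal[OF on] by blast
  have "z = p z" for z
  proof -
    have "bil (z - p z) y = 0" for y
    proof -
      have "bil (z - p z) (p y) = (\<Sum>j<m. bil (a j) y * bil (z - p z) (a j))"
        by (simp add: p_def bil_linear)
      also have "\<dots> = 0" using residual by (simp add: bil_commute)
      finally show ?thesis
        using W_self_orth[OF residual residual, of z y] by (simp add: bil_diff_right)
    qed
    then show ?thesis using bil_nondegenerate[of "z - p z"] by simp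
  qed
  moreover have "p z \<in> vec.span (a ` {..<m})" for z
    unfolding p_def by (intro vec.span_sum vec.span_scale vec.span_base) auto
  ultimately have "UNIV \<subseteq> vec.span (a ` {..<m})" by (metis subsetI)
  then have "vec.dim (UNIV :: (complex^'n) set) \<le> card (a ` {..<m})"
    by (intro vec.dim_le_card) auto
  moreover have "card (a ` {..<m}) \<le> m" using card_image_le[of "{..<m}" a] by simp
  moreover have "vec.dim (UNIV :: (complex^'n) set) = CARD('n)" by (rule vec_dim_card)
  ultimately show False using m by linarith
qed

lemma orthonormal_fun_upd:
  assumes "orthonormal m a" "\<forall>j<m. bil (a j) x = 0" "bil x x = 1"
  shows "orthonormal (Suc m) (a(m := x))"
  unfolding orthonormal_def
proof (intro allI impI)
  fix i j assume "i < Suc m" "j < Suc m"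
  then consider "i < m" "j < m" | "i = m" "j < m" | "i < m" "j = m" | "i = m" "j = m"
    by linarith
  then show "bil ((a(m := x)) i) ((a(m := x)) j) = (if i = j then 1 else 0)"
    by cases (use assms in \<open>auto simp: orthonormal_def bil_commute[of x "a j"]\<close>)
qed

lemma orthonormal_extend_to_basis:
  assumes "orthonormal m (a :: nat \<Rightarrow> complex^'n::finite)" "m \<le> CARD('n)"
  shows "\<exists>b. orthonormal CARD('n) b \<and> (\<forall>j<m. b j = a j)"
  using assms(2)
proof (induction rule: dec_induct)
  case base
  then show ?case using assms(1) by blast
next
  case (step l)
  then obtain b where b: "orthonormal l b" "\<forall>j<m. b j = a j" by blast
  obtain x where "\<forall>j<l. bil (b j) x = 0" "bil x x \<noteq> 0"
    using orthonormal_complement_nonisotropic[OF b(1) step(2)] by blast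
  then have "orthonormal (Suc l) (b(l := (1 / csqrt (bil x x)) *s x))"
    by (intro orthonormal_fun_upd[OF b(1)] bil_normalize) (simp_all add: bil_scale_right)
  then show ?case using b(2) step(1) by auto
qed

definition orth_nonisotropic :: "nat \<Rightarrow> (nat \<Rightarrow> complex ^('n::finite)) \<Rightarrow> bool" where
  "orth_nonisotropic k u \<longleftrightarrow>
     (\<forall>i<k. \<forall>j<k. i \<noteq> j \<longrightarrow> bil (u i) (u j) = 0) \<and> (\<forall>j<k. bil (u j) (u j) \<noteq> 0)"

lemma orth_nonisotropic_rescaled_basis:
  assumes u: "orth_nonisotropic k (u :: nat \<Rightarrow> complex^'n::finite)" and k: "k \<le> CARD('n)"
  shows "\<exists>a r. orthonormal CARD('n) a \<and> (\<forall>j<k. u j = r j *s a j)"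
proof -
  define r where "r j = csqrt (bil (u j) (u j))" for j
  have r0: "r j \<noteq> 0" if "j < k" for j
    using u that unfolding orth_nonisotropic_def r_def by simp
  have "orthonormal k (\<lambda>j. (1 / r j) *s u j)"
    unfolding orthonormal_def
  proof (intro allI impI)
    fix i j assume ij: "i < k" "j < k"
    show "bil ((1 / r i) *s u i) ((1 / r j) *s u j) = (if i = j then 1 else 0)"
    proof (cases "i = j")
      case True
      then show ?thesis
        using u ij bil_normalize[of "u j"] unfolding orth_nonisotropic_def r_def by simp
    next
      case False
      then show ?thesis
        using u ij unfolding orth_nonisotropic_def by (simp add: bil_scale_left bil_scale_right)
    qed
  qed
  then obtain a where a: "orthonormal CARD('n) a" "\<forall>j<k. a j = (1 / r j) *s u j"
    using orthonormal_extend_to_basis k by blast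
  then have "\<forall>j<k. u j = r j *s a j" using r0 by simp
  with a(1) show ?thesis by blast
qed

lemma orthonormal_basis_corthogonal:
  assumes "orthonormal CARD('n) b" "bij_betw \<iota> (UNIV :: 'n::finite set) {..<CARD('n)}"
  shows "corthogonal (\<chi> i. b (\<iota> i))"
  unfolding corthogonal_iff_rows
proof (intro allI)
  fix i j
  have "\<iota> i < CARD('n)" "\<iota> j < CARD('n)" using bij_betwE[OF assms(2)] by auto
  moreover have "\<iota> i = \<iota> j \<longleftrightarrow> i = j" using assms(2) by (auto simp: bij_betw_def inj_on_def)
  ultimately show "bil ((\<chi> i. b (\<iota> i)) $ i) ((\<chi> i. b (\<iota> i)) $ j) = (if i = j then 1 else 0)"
    using assms(1) unfolding orthonormal_def by simp
qed

lemma outer3_scale: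
  "outer3 (a *s u) (b *s v) (c *s w) = outer3 ((a * b * c) *s u) v w"
  unfolding outer3_def by (simp add: vec_eq_iff mult_ac)

lemma outer3_zero_left [simp]: "outer3 0 v w = 0"
  unfolding outer3_def by (simp add: vec_eq_iff)

lemma orth_nonisotropic_sum_in_OT:
  assumes k: "k \<le> CARD('n)"
    and "orth_nonisotropic k (u :: nat \<Rightarrow> complex^'n::finite)"
    and "orth_nonisotropic k v" and "orth_nonisotropic k w"
  shows "(\<Sum>j<k. outer3 (u j) (v j) (w j)) \<in> OT"
proof -
  obtain a ra where a: "orthonormal CARD('n) a" "\<forall>j<k. u j = ra j *s a j"
    using orth_nonisotropic_rescaled_basis assms(2) k by blast
  obtain b rb where b: "orthonormal CARD('n) b" "\<forall>j<k. v j = rb j *s b j"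
    using orth_nonisotropic_rescaled_basis assms(3) k by blast
  obtain c rc where c: "orthonormal CARD('n) c" "\<forall>j<k. w j = rc j *s c j"
    using orth_nonisotropic_rescaled_basis assms(4) k by blast
  obtain \<iota> :: "'n \<Rightarrow> nat" where \<iota>: "bij_betw \<iota> UNIV {..<CARD('n)}"
    using ex_bij_betw_finite_nat[of "UNIV :: 'n set"] lessThan_atLeast0 by auto
  define \<gamma> where "\<gamma> j = (if j < k then ra j * rb j * rc j else 0)" for j
  define F where "F j = outer3 (\<gamma> j *s a j) (b j) (c j)" for j
  have "(\<Sum>i\<in>UNIV. outer3 ((\<chi> i. \<gamma> (\<iota> i)) $ i *s (\<chi> i. a (\<iota> i)) $ i)
        ((\<chi> i. b (\<iota> i)) $ i) ((\<chi> i. c (\<iota> i)) $ i)) = (\<Sum>i\<in>UNIV. F (\<iota> i))"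
    by (simp add: F_def)
  also have "\<dots> = (\<Sum>j<CARD('n). F j)" by (rule sum.reindex_bij_betw[OF \<iota>])
  also have "\<dots> = (\<Sum>j<k. F j)"
    using k by (intro sum.mono_neutral_right) (auto simp: F_def \<gamma>_def)
  also have "\<dots> = (\<Sum>j<k. outer3 (u j) (v j) (w j))"
    by (intro sum.cong) (simp_all add: F_def \<gamma>_def a(2) b(2) c(2) outer3_scale)
  finally show ?thesis
    unfolding mem_OT_iff
    by (intro exI[of _ "\<chi> i. a (\<iota> i)"] exI[of _ "\<chi> i. b (\<iota> i)"]
        exI[of _ "\<chi> i. c (\<iota> i)"] exI[of _ "\<chi> i. \<gamma> (\<iota> i)"] conjI
        orthonormal_basis_corthogonal[OF _ \<iota>] a(1) b(1) c(1)) simp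
qed

lemma orthonormal_rows_lin_indep_orth:
  assumes on: "\<And>i j. bil (a i) (a j) = (if i = j then 1 else (0::complex))"
    and h: "inj_on h {..<k}" and s: "\<And>j. j < k \<Longrightarrow> s j \<noteq> 0"
  shows "lin_indep_orth k (\<lambda>j. s j *s (a (h j) :: complex^'n::finite))"
  unfolding lin_indep_orth_def
proof (intro conjI allI impI)
  fix c :: "nat \<Rightarrow> complex" and m
  assume sum0: "(\<Sum>j<k. c j *s (s j *s a (h j))) = 0" and m: "m < k"
  have "bil (a (h m)) (\<Sum>j<k. c j *s (s j *s a (h j))) = (\<Sum>j<k. if j = m then c j * s j else 0)"
    unfolding bil_sum_right bil_scale_right
    by (intro sum.cong refl) (use h m in \<open>auto simp: on inj_on_def\<close>)
  then have "c m * s m = 0" using sum0 m by simp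
  then show "c m = 0" using s[OF m] by simp
next
  fix i j assume "i < k" "j < k" "i \<noteq> j"
  then have "h i \<noteq> h j" using h by (auto simp: inj_on_def)
  then show "bil (s i *s a (h i)) (s j *s a (h j)) = 0"
    by (simp add: bil_scale_left bil_scale_right on)
qed

lemma OT_subset_ODECO: "OT \<subseteq> ODECO"
proof
  fix T :: "'n::finite tensor3" assume "T \<in> OT"
  then obtain A B C \<alpha> where ABC: "corthogonal A" "corthogonal B" "corthogonal C"
    and T: "T = (\<Sum>i\<in>UNIV. outer3 (\<alpha> $ i *s A $ i) (B $ i) (C $ i))"
    unfolding mem_OT_iff by blast
  define S where "S = {i. \<alpha> $ i \<noteq> 0}"
  obtain h where h: "bij_betw h {..<card S} S"
    using ex_bij_betw_nat_finite[of S] lessThan_atLeast0 by auto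
  have hS: "\<alpha> $ h j \<noteq> 0" if "j < card S" for j
    using h that by (auto simp: bij_betw_def S_def)
  have inj: "inj_on h {..<card S}" using h by (simp add: bij_betw_def)
  have "T = (\<Sum>i\<in>S. outer3 (\<alpha> $ i *s A $ i) (B $ i) (C $ i))"
    unfolding T by (intro sum.mono_neutral_right) (auto simp: S_def)
  also have "\<dots> = (\<Sum>j<card S. outer3 (\<alpha> $ h j *s A $ h j) (B $ h j) (C $ h j))"
    by (rule sum.reindex_bij_betw[OF h, symmetric])
  moreover have "lin_indep_orth (card S) (\<lambda>j. \<alpha> $ h j *s A $ h j)"
    using ABC(1)
    by (intro orthonormal_rows_lin_indep_orth[OF _ inj hS]) (simp add: corthogonal_iff_rows)
  moreover have "lin_indep_orth (card S) (\<lambda>j. M $ h j)" if "corthogonal M" for M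
    using orthonormal_rows_lin_indep_orth[OF _ inj, of "\<lambda>i. M $ i" "\<lambda>_. 1"] that
    by (simp add: corthogonal_iff_rows)
  ultimately show "T \<in> ODECO"
    unfolding ODECO_def using ABC(2,3) by blast
qed

text \<open>Half of the Gram matrix of the dual vectors \<open>z j\<close>, spent on the isotropic \<open>u p\<close>, corrects
  them into a totally isotropic family without changing their pairing with the \<open>u l\<close>.\<close>
lemma isotropic_correction:
  assumes ind: "lin_indep k (u :: nat \<Rightarrow> complex^'n::finite)" and I: "I \<subseteq> {..<k}"
    and orth: "\<And>l p. l < k \<Longrightarrow> p \<in> I \<Longrightarrow> bil (u l) (u p) = 0"
  shows "\<exists>y. (\<forall>l<k. \<forall>j. bil (u l) (y j) = (if l = j \<and> j \<in> I then 1 else 0))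
           \<and> (\<forall>j m. bil (y j) (y m) = 0)"
proof -
  obtain z where z: "\<And>j l. j < k \<Longrightarrow> l < k \<Longrightarrow> bil (u l) (z j) = (if l = j then 1 else 0)"
    using lin_indep_dual[OF ind] by blast
  have fin: "finite I" using I finite_subset by blast
  define S where "S j = (\<Sum>p\<in>I. bil (z j) (z p) *s u p)" for j
  define y where "y j = (if j \<in> I then z j - (1/2) *s S j else 0)" for j
  have uS: "bil (u l) (S j) = 0" if "l < k" for l j
    unfolding S_def bil_sum_right bil_scale_right using orth[OF that] by simp
  have zS: "bil (z j) (S m) = bil (z m) (z j)" if "j \<in> I" for j m
  proof -
    have "bil (z j) (u p) = (if p = j then 1 else 0)" if "p \<in> I" for p
      using z[of j p] I that \<open>j \<in> I\<close> by (auto simp: bil_commute[of "z j" "u p"] subset_iff)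
    then have "bil (z j) (S m) = (\<Sum>p\<in>I. bil (z m) (z p) * (if p = j then 1 else 0))"
      unfolding S_def bil_sum_right bil_scale_right by (intro sum.cong refl) auto
    also have "\<dots> = bil (z m) (z j)" using that fin by (simp add: if_distrib cong: if_cong)
    finally show ?thesis .
  qed
  have SS: "bil (S j) (S m) = 0" for j m
    unfolding S_def[of j] bil_sum_left bil_scale_left
    using I uS by (intro sum.neutral) (auto simp: subset_iff)
  have "bil (u l) (y j) = (if l = j \<and> j \<in> I then 1 else 0)" if "l < k" for l j
    using that z[of j l] uS[OF that, of j] I
    by (auto simp: y_def bil_diff_right bil_scale_right)
  moreover have "bil (y j) (y m) = 0" for j m
  proof (cases "j \<in> I \<and> m \<in> I")
    case True
    then have "bil (y j) (y m) = bil (z j) (z m) - (1/2) * bil (z j) (S m)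
        - (1/2) * bil (S j) (z m) + (1/4) * bil (S j) (S m)"
      by (simp add: y_def bil_linear algebra_simps)
    also have "\<dots> = 0" using True zS[of j m] zS[of m j] SS[of j m]
      by (simp add: bil_commute[of "S j" "z m"] bil_commute[of "z m" "z j"])
    finally show ?thesis .
  qed (auto simp: y_def)
  ultimately show ?thesis by blast
qed

lemma lin_indep_orth_perturb:
  assumes "lin_indep_orth k (u :: nat \<Rightarrow> complex^'n::finite)"
  shows "\<exists>y. \<forall>\<epsilon>. \<epsilon> \<noteq> 0 \<longrightarrow> orth_nonisotropic k (\<lambda>j. u j + \<epsilon> *s y j)"
proof -
  have ind: "lin_indep k u"
    and orth: "\<And>i j. i < k \<Longrightarrow> j < k \<Longrightarrow> i \<noteq> j \<Longrightarrow> bil (u i) (u j) = 0"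
    using assms unfolding lin_indep_orth_iff by blast+
  define I where "I = {j. j < k \<and> bil (u j) (u j) = 0}"
  have "bil (u l) (u p) = 0" if "l < k" "p \<in> I" for l p
    using that orth[of l p] unfolding I_def by (cases "l = p") auto
  then obtain y where
    uy: "\<And>l j. l < k \<Longrightarrow> bil (u l) (y j) = (if l = j \<and> j \<in> I then 1 else 0)" and
    yy: "\<And>j m. bil (y j) (y m) = 0"
    using isotropic_correction[OF ind, of I] unfolding I_def by blast
  have gram: "bil (u j + \<epsilon> *s y j) (u m + \<epsilon> *s y m)
      = bil (u j) (u m) + (if j = m \<and> j \<in> I then 2 * \<epsilon> else 0)"
    if "j < k" "m < k" for j m \<epsilon>
  proof -
    have "bil (u j + \<epsilon> *s y j) (u m + \<epsilon> *s y m) = bil (u j) (u m)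
        + \<epsilon> * bil (u j) (y m) + \<epsilon> * bil (u m) (y j) + \<epsilon> * \<epsilon> * bil (y j) (y m)"
      by (simp add: bil_linear bil_commute[of "y j" "u m"] algebra_simps)
    then show ?thesis using uy[OF that(1), of m] uy[OF that(2), of j] yy[of j m] by auto
  qed
  show ?thesis
  proof (intro exI allI impI)
    fix \<epsilon> :: complex assume "\<epsilon> \<noteq> 0"
    then show "orth_nonisotropic k (\<lambda>j. u j + \<epsilon> *s y j)"
      unfolding orth_nonisotropic_def using gram orth by (auto simp: I_def)
  qed
qed

lemma ODECO_subset_closure_OT: "ODECO \<subseteq> closure OT"
proof
  fix T :: "'n::finite tensor3" assume "T \<in> ODECO"
  then obtain k u v w where uvw: "lin_indep_orth k u" "lin_indep_orth k v" "lin_indep_orth k w"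
    and T: "T = (\<Sum>j<k. outer3 (u j) (v j) (w j))"
    unfolding ODECO_def by blast
  have k: "k \<le> CARD('n)" using lin_indep_le_card uvw(1) unfolding lin_indep_orth_iff by blast
  obtain yu where yu: "\<And>\<epsilon>. \<epsilon> \<noteq> 0 \<Longrightarrow> orth_nonisotropic k (\<lambda>j. u j + \<epsilon> *s yu j)"
    using lin_indep_orth_perturb[OF uvw(1)] by blast
  obtain yv where yv: "\<And>\<epsilon>. \<epsilon> \<noteq> 0 \<Longrightarrow> orth_nonisotropic k (\<lambda>j. v j + \<epsilon> *s yv j)"
    using lin_indep_orth_perturb[OF uvw(2)] by blast
  obtain yw where yw: "\<And>\<epsilon>. \<epsilon> \<noteq> 0 \<Longrightarrow> orth_nonisotropic k (\<lambda>j. w j + \<epsilon> *s yw j)"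
    using lin_indep_orth_perturb[OF uvw(3)] by blast
  define e :: "nat \<Rightarrow> complex" where "e m = 1 / of_nat (Suc m)" for m
  have e0: "e m \<noteq> 0" for m unfolding e_def by (simp del: of_nat_Suc)
  have e_lim: "e \<longlonglongrightarrow> 0" unfolding e_def using LIMSEQ_Suc[OF lim_1_over_n] by simp
  define f where
    "f m = (\<Sum>j<k. outer3 (u j + e m *s yu j) (v j + e m *s yv j) (w j + e m *s yw j))" for m
  have "f m \<in> OT" for m
    unfolding f_def by (rule orth_nonisotropic_sum_in_OT[OF k yu[OF e0] yv[OF e0] yw[OF e0]])
  moreover have "f \<longlonglongrightarrow> T"
  proof (intro vec_tendstoI)
    fix a b c
    have "((\<lambda>m. \<Sum>j<k. (u j $ a + e m * yu j $ a) * (v j $ b + e m * yv j $ b)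
                       * (w j $ c + e m * yw j $ c))
        \<longlongrightarrow> (\<Sum>j<k. (u j $ a + 0 * yu j $ a) * (v j $ b + 0 * yv j $ b)
                  * (w j $ c + 0 * yw j $ c))) sequentially"
      by (intro tendsto_intros e_lim)
    then show "((\<lambda>m. f m $ a $ b $ c) \<longlongrightarrow> T $ a $ b $ c) sequentially"
      unfolding f_def T sum_component outer3_def by simp
  qed
  ultimately show "T \<in> closure OT" unfolding closure_sequential by blast
qed

lemma diag_form_axis: "diag_form \<alpha> x (axis m 1) (axis m 1) = \<alpha> $ m * x $ m"
  unfolding diag_form_def axis_def by (simp add: if_distrib[of "(*) _"] cong: if_cong)

text \<open>Pairing with the rows \<open>B $ m\<close>, \<open>C $ m\<close> shows \<open>\<alpha> $ m * A $ m\<close> to be a multiple of the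
  isotropic \<open>u\<close>; as \<open>A $ m\<close> has square \<open>1\<close>, this forces \<open>\<alpha> $ m\<^sup>2 = 0\<close>.\<close>
lemma isotropic_outer3_in_OT_imp_zero:
  assumes u: "bil u u = 0" and "outer3 u v w \<in> OT"
  shows "outer3 u v w = 0"
proof -
  obtain A B C \<alpha> where ABC: "corthogonal A" "corthogonal B" "corthogonal C"
    and tr: "\<And>x y z. trilin (outer3 u v w) x y z = diag_form \<alpha> (A *v x) (B *v y) (C *v z)"
    using assms(2) unfolding OT_def by blast
  have \<alpha>0: "\<alpha> $ m = 0" for m
  proof -
    define \<beta> where "\<beta> = bil v (B $ m) * bil w (C $ m)"
    have lin: "\<alpha> $ m * bil (A $ m) x = bil u x * \<beta>" for x
      using tr[of x "B $ m" "C $ m"]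
      by (simp add: corthogonal_mult_row ABC diag_form_axis matrix_vector_mult_component_bil
          trilin_outer3 \<beta>_def mult_ac)
    have "\<alpha> $ m = bil u (A $ m) * \<beta>"
      using lin[of "A $ m"] ABC(1) by (simp add: corthogonal_iff_rows)
    then have "\<alpha> $ m * \<alpha> $ m = (\<alpha> $ m * bil (A $ m) u) * \<beta>"
      by (simp add: bil_commute[of u] mult_ac)
    also have "\<dots> = 0" using lin[of u] u by simp
    finally show ?thesis by simp
  qed
  have "trilin (outer3 u v w) x y z = trilin 0 x y z" for x y z
    unfolding tr by (simp add: diag_form_def \<alpha>0)
  then show ?thesis by (rule tensor_eqI)
qed

lemma lin_indep_orth_single: "x \<noteq> 0 \<Longrightarrow> lin_indep_orth 1 (\<lambda>_. x)"
  unfolding lin_indep_orth_def by (simp add: vec.scale_eq_0_iff)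

lemma OT_neq_ODECO:
  assumes "CARD('n::finite) \<ge> 2"
  shows "(OT :: 'n tensor3 set) \<noteq> ODECO"
proof -
  obtain p q :: 'n where pq: "p \<noteq> q"
    using assms card_le_Suc0_iff_eq[of "UNIV :: 'n set"] by fastforce
  define u :: "complex^'n" where "u = axis p 1 + \<i> *s axis q 1"
  define e :: "complex^'n" where "e = axis p 1"
  have up: "u $ p = 1" and ep: "e $ p = 1" using pq by (simp_all add: u_def e_def axis_def)
  then have "outer3 u e e $ p $ p $ p = 1" by (simp add: outer3_def)
  then have "outer3 u e e \<noteq> 0" by auto
  moreover have "bil u u = 0"
    using pq by (simp add: u_def bil_linear bil_axis_right, simp add: axis_def)
  moreover have "outer3 u e e \<in> ODECO"
  proof -
    have "u \<noteq> 0" "e \<noteq> 0" using up ep by auto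
    moreover have "outer3 u e e = (\<Sum>j<(1::nat). outer3 ((\<lambda>_. u) j) ((\<lambda>_. e) j) ((\<lambda>_. e) j))"
      by simp
    ultimately show ?thesis unfolding ODECO_def using lin_indep_orth_single by blast
  qed
  ultimately show ?thesis using isotropic_outer3_in_OT_imp_zero by blast
qed

theorem theorem47:
  assumes "CARD('n::finite) \<ge> 2"
  shows "(OT :: 'n tensor3 set) \<subseteq> ODECO \<and> (ODECO :: 'n tensor3 set) \<subseteq> closure OT
         \<and> (OT :: 'n tensor3 set) \<noteq> ODECO"
  using OT_subset_ODECO ODECO_subset_closure_OT OT_neq_ODECO[OF assms] by blast

end
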